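(* There exist universal constants $c,c'>0$ such that for all integers $d\ge1$ and $k$ with $d$ dividing $k-1$, the Octopus graph $G_{k,d}$ satisfies $c/d^2\le\lambda_2\le c'/d^2$, where $\lambda_2$ is the second-smallest eigenvalue of its Laplacian; i.e. $\lambda_2=\Theta(1/d^2)$.
   Context: Octopus graph $G_{k,d}$: for nodes $i<j$ in $\{1,\dots,k\}$, $\{i,j\}$ is an edge iff either ($j=k$ and $i\equiv1\pmod d$) or ($j\ne k$, $j=i+1$ and $i\not\equiv0\pmod d$). Thus node $k$ is a centre from which $(k-1)/d$ paths of $d$ nodes each emanate. The Laplacian has diagonal entries equal to degrees and $-1$ for adjacent pairs, $0$ otherwise. *)

theory Defs
  imports "Jordan_Normal_Form.Char_Poly" "HOL-Computational_Algebra.Polynomial_Factorial"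
begin

text \<open>Adjacency in the Octopus graph G_{k,d} on nodes 1..k (1-based, as in the paper):
  for i < j, {i,j} is an edge iff (j = k and i mod d = 1 mod d) or (j \<noteq> k, j = i+1 and i mod d \<noteq> 0).\<close>
definition octo_edge_lt :: "nat \<Rightarrow> nat \<Rightarrow> nat \<Rightarrow> nat \<Rightarrow> bool" where
  "octo_edge_lt k d i j \<longleftrightarrow> 1 \<le> i \<and> i < j \<and> j \<le> k \<and>
     ((j = k \<and> i mod d = 1 mod d) \<or> (j \<noteq> k \<and> j = i + 1 \<and> i mod d \<noteq> 0))"

definition octo_adj :: "nat \<Rightarrow> nat \<Rightarrow> nat \<Rightarrow> nat \<Rightarrow> bool" where
  "octo_adj k d i j \<longleftrightarrow> octo_edge_lt k d i j \<or> octo_edge_lt k d j i"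

definition octo_degree :: "nat \<Rightarrow> nat \<Rightarrow> nat \<Rightarrow> nat" where
  "octo_degree k d i = card {j \<in> {1..k}. octo_adj k d i j}"

text \<open>Laplacian as a k x k real matrix; matrix index i (0-based) corresponds to node i+1.\<close>
definition octo_laplacian :: "nat \<Rightarrow> nat \<Rightarrow> real mat" where
  "octo_laplacian k d = mat k k (\<lambda>(i, j).
     if i = j then real (octo_degree k d (i + 1))
     else if octo_adj k d (i + 1) (j + 1) then -1 else 0)"

definition sorted_eigenvalues :: "real mat \<Rightarrow> real list" where
  "sorted_eigenvalues A = sorted_list_of_multiset (proots (char_poly A))"

definition lambda2 :: "real mat \<Rightarrow> real" where
  "lambda2 A = sorted_eigenvalues A ! 1"

end

theory Submission
  imports Defs "Jordan_Normal_Form.Schur_Decomposition"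
begin

text \<open>
  The Laplacian is real symmetric, so it has an orthonormal eigenbasis and its second eigenvalue
  obeys the Courant--Fischer bounds: it is at least \<open>t\<close> if the Rayleigh quotient is at least \<open>t\<close>
  on a hyperplane, and at most \<open>t\<close> if the Rayleigh quotient is at most \<open>t\<close> on a plane.
  The quadratic form of the Laplacian is the sum of the squared differences along the edges.

  Lower bound: a vector \<open>x\<close> with zero mean satisfies \<open>|x|\<^sup>2 \<le> \<Sum>\<^sub>i (x\<^sub>i - x\<^sub>c)\<^sup>2\<close> for the
  centre \<open>c\<close>; on every arm \<open>x\<^sub>i - x\<^sub>c\<close> telescopes over at most \<open>d\<close> edges, so Cauchy--Schwarz
  gives the Poincare inequality \<open>|x|\<^sup>2 \<le> d\<^sup>2 x\<^sup>T L x\<close> on the hyperplane orthogonal to the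
  constant vector.

  Upper bound: the ramp \<open>1, 2, \<dots>, d\<close> along one arm (zero elsewhere) has energy \<open>d\<close>, while after
  centring its squared norm is at least \<open>d\<^sup>3 / 12\<close>; together with the constant vector it spans a
  plane on which the Rayleigh quotient is at most \<open>12 / d\<^sup>2\<close>.
\<close>

section \<open>Real symmetric matrices\<close>

lemma symmetric_mat_index:
  assumes "A\<^sup>T = A" "i < dim_row A" "j < dim_col A"
  shows "A $$ (i, j) = A $$ (j, i)"
proof -
  have "A\<^sup>T $$ (j, i) = A $$ (i, j)" using assms(2,3) by simp
  then show ?thesis using assms(1) by simp
qed

lemma real_sprod_self_pos: "w \<in> carrier_vec n \<Longrightarrow> w \<noteq> 0\<^sub>v n \<Longrightarrow> (w :: real vec) \<bullet> w > 0"
  using conjugate_square_greater_0_vec[of w n] by simp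

lemma real_symmetric_complex_eigenvalue_real:
  fixes A :: "real mat"
  assumes A: "A \<in> carrier_mat n n" and sym: "A\<^sup>T = A"
    and ev: "eigenvalue (map_mat complex_of_real A) lam"
  shows "lam \<in> \<real>"
proof -
  let ?Ac = "map_mat complex_of_real A"
  obtain z where "eigenvector ?Ac z lam" using ev by (auto simp: eigenvalue_def)
  then have z: "z \<in> carrier_vec n" "z \<noteq> 0\<^sub>v n" "?Ac *\<^sub>v z = lam \<cdot>\<^sub>v z"
    using A by (auto simp: eigenvector_def)
  have Aij: "A $$ (i, j) = A $$ (j, i)" if "i < n" "j < n" for i j
    using symmetric_mat_index[OF sym] that A by simp
  have row: "(\<Sum>j=0..<n. complex_of_real (A $$ (i, j)) * z $ j) = lam * z $ i" if "i < n" for i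
    using arg_cong[OF z(3), of "\<lambda>w. w $ i"] that A z(1) by (simp add: scalar_prod_def)
  \<comment> \<open>\<open>S = z\<^sup>* A z\<close> equals \<open>lam |z|\<^sup>2\<close> and is real because \<open>A\<close> is real symmetric.\<close>
  define S where "S = (\<Sum>i=0..<n. \<Sum>j=0..<n. cnj (z $ i) * complex_of_real (A $$ (i, j)) * z $ j)"
  define N where "N = (\<Sum>i=0..<n. (norm (z $ i))\<^sup>2)"
  have "S = (\<Sum>i=0..<n. cnj (z $ i) * (\<Sum>j=0..<n. complex_of_real (A $$ (i, j)) * z $ j))"
    unfolding S_def by (simp add: sum_distrib_left mult.assoc)
  also have "\<dots> = lam * (\<Sum>i=0..<n. cnj (z $ i) * z $ i)"
    using row by (simp add: sum_distrib_left mult_ac)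
  also have "(\<Sum>i=0..<n. cnj (z $ i) * z $ i) = complex_of_real N"
    unfolding N_def of_real_sum complex_norm_square by (simp add: mult.commute)
  finally have S_lam: "S = lam * complex_of_real N" .
  have "cnj S = (\<Sum>i=0..<n. \<Sum>j=0..<n. z $ i * complex_of_real (A $$ (i, j)) * cnj (z $ j))"
    unfolding S_def by simp
  also have "\<dots> = (\<Sum>j=0..<n. \<Sum>i=0..<n. z $ i * complex_of_real (A $$ (i, j)) * cnj (z $ j))"
    by (rule sum.swap)
  also have "\<dots> = S"
    unfolding S_def by (intro sum.cong refl) (simp add: Aij mult_ac)
  finally have S_real: "cnj S = S" .
  obtain i where i: "i < n" "z $ i \<noteq> 0"
    using z(1,2) by (metis carrier_vecD eq_vecI index_zero_vec)
  have "(norm (z $ i))\<^sup>2 \<le> N" unfolding N_def by (rule member_le_sum) (use i in auto)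
  then have "N > 0" using i by (smt (verit) zero_less_norm_iff zero_less_power)
  then have "cnj lam = lam" using S_lam S_real by (metis complex_cnj_complex_of_real complex_cnj_mult
        mult_cancel_right of_real_eq_0_iff less_irrefl)
  then show ?thesis by (metis Reals_cnj_iff)
qed

lemma real_symmetric_unit_eigenvector:
  fixes A :: "real mat"
  assumes A: "A \<in> carrier_mat n n" and n: "n > 0" and sym: "A\<^sup>T = A"
  shows "\<exists>e v. v \<in> carrier_vec n \<and> v \<bullet> v = 1 \<and> A *\<^sub>v v = e \<cdot>\<^sub>v v"
proof -
  let ?Ac = "map_mat complex_of_real A"
  have Ac: "?Ac \<in> carrier_mat n n" using A by auto
  obtain lams where cp: "char_poly ?Ac = (\<Prod>a\<leftarrow>lams. [:- a, 1:])" and "length lams = n"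
    using char_poly_factorized[OF Ac] by auto
  then obtain lam where "lam \<in> set lams" using n by (cases lams) auto
  then have "poly (char_poly ?Ac) lam = 0"
    unfolding cp by (simp add: poly_prod_list_zero_iff)
  then have ev: "eigenvalue ?Ac lam" using eigenvalue_root_char_poly[OF Ac] by simp
  then obtain e where lam: "lam = complex_of_real e"
    using real_symmetric_complex_eigenvalue_real[OF A sym] by (auto elim: Reals_cases)
  have "poly (char_poly A) e = 0"
    using \<open>poly (char_poly ?Ac) lam = 0\<close>
    unfolding lam of_real_hom.char_poly_hom[OF A] of_real_hom.poly_map_poly by simp
  then have "eigenvalue A e" using eigenvalue_root_char_poly[OF A] by simp
  then obtain v where "eigenvector A v e" by (auto simp: eigenvalue_def)
  then have v: "v \<in> carrier_vec n" "v \<noteq> 0\<^sub>v n" "A *\<^sub>v v = e \<cdot>\<^sub>v v"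
    using A by (auto simp: eigenvector_def)
  define v1 where "v1 = (1 / sqrt (v \<bullet> v)) \<cdot>\<^sub>v v"
  have "v1 \<bullet> v1 = 1"
    unfolding v1_def using v real_sprod_self_pos[OF v(1,2)] by (simp add: field_simps)
  moreover have "A *\<^sub>v v1 = e \<cdot>\<^sub>v v1"
    unfolding v1_def using v A by (simp add: mult_mat_vec smult_smult_assoc mult.commute)
  moreover have "v1 \<in> carrier_vec n" unfolding v1_def using v by simp
  ultimately show ?thesis by blast
qed

lemma normalized_corthogonal_list:
  fixes ws :: "real vec list"
  assumes ws: "set ws \<subseteq> carrier_vec n" and orth: "corthogonal ws"
    and i: "i < length ws" and j: "j < length ws"
  defines "us \<equiv> map (\<lambda>w. (1 / sqrt (w \<bullet> w)) \<cdot>\<^sub>v w) ws"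
  shows "us ! i \<bullet> us ! j = (if i = j then 1 else 0)"
proof -
  have ws_orth: "ws ! i \<bullet> ws ! j = 0 \<longleftrightarrow> i \<noteq> j" if "i < length ws" "j < length ws" for i j
    using corthogonalD[OF orth that] by simp
  have c: "ws ! i \<in> carrier_vec n" "ws ! j \<in> carrier_vec n" using ws i j by auto
  then have "ws ! i \<noteq> 0\<^sub>v n" using ws_orth[OF i i] by auto
  then have pos: "ws ! i \<bullet> ws ! i > 0" using c(1) by (rule real_sprod_self_pos[rotated])
  have "us ! i \<bullet> us ! j = (ws ! i \<bullet> ws ! j) / (sqrt (ws ! i \<bullet> ws ! i) * sqrt (ws ! j \<bullet> ws ! j))"
    unfolding us_def using c i j by simp
  then show ?thesis using ws_orth[OF i j] pos by (auto simp: real_sqrt_mult[symmetric])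
qed

lemma orthonormal_completion:
  fixes v :: "real vec"
  assumes v: "v \<in> carrier_vec n" and unit: "v \<bullet> v = 1"
  shows "\<exists>U \<in> carrier_mat n n. U\<^sup>T * U = 1\<^sub>m n \<and> col U 0 = v"
proof -
  interpret cof_vec_space n "TYPE(real)" .
  have v0: "v \<noteq> 0\<^sub>v n" using unit v by auto
  then have n: "n > 0" using v by (cases n) auto
  define b where "b = basis_completion v"
  from basis_completion[OF v v0, folded b_def]
  have dist_b: "distinct b" and indep: "\<not> lin_dep (set b)" and b: "set b \<subseteq> carrier_vec n"
    and "hd b = v" and len_b: "length b = n" by auto
  then obtain vs where bv: "b = v # vs" using n by (cases b) auto
  define ws where "ws = gram_schmidt n b"
  from gram_schmidt_result[OF b dist_b indep refl, folded ws_def]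
  have ws: "set ws \<subseteq> carrier_vec n" and orth: "corthogonal ws" and len_ws: "length ws = n"
    by (auto simp: len_b)
  have hd_ws: "hd ws = v" unfolding ws_def bv using gram_schmidt_hd[OF v] by simp
  define us where "us = map (\<lambda>w. (1 / sqrt (w \<bullet> w)) \<cdot>\<^sub>v w) ws"
  have us: "us ! i \<in> carrier_vec n" if "i < n" for i
    unfolding us_def using that len_ws ws by auto
  define U where "U = mat_of_cols n us"
  have U: "U \<in> carrier_mat n n" unfolding U_def using mat_of_cols_carrier(1)[of n us] by (simp add: us_def len_ws)
  have col_U: "col U i = us ! i" if "i < n" for i
    unfolding U_def using that us by (simp add: us_def len_ws)
  have "U\<^sup>T * U = 1\<^sub>m n"
    by (rule eq_matI) (use U col_U normalized_corthogonal_list[OF ws orth] len_ws in \<open>auto simp: us_def\<close>)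
  moreover have "col U 0 = v"
    using col_U[OF n] hd_ws unit len_ws n unfolding us_def by (cases ws) auto
  ultimately show ?thesis using U by blast
qed

lemma transpose_mult_mult_index:
  assumes "U \<in> carrier_mat n n" "A \<in> carrier_mat n n" "i < n" "j < n"
  shows "(U\<^sup>T * A * U) $$ (i, j) = col U i \<bullet> (A *\<^sub>v col U j)"
proof -
  have "U\<^sup>T * A * U = U\<^sup>T * (A * U)" using assms by (simp add: assoc_mult_mat[of _ n n _ n _ n])
  then show ?thesis using assms by (simp add: mult_mat_vec_def)
qed

lemma real_symmetric_deflation:
  fixes A :: "real mat"
  assumes A: "A \<in> carrier_mat (Suc m) (Suc m)" and sym: "A\<^sup>T = A"
  shows "\<exists>U e B. U \<in> carrier_mat (Suc m) (Suc m) \<and> U\<^sup>T * U = 1\<^sub>m (Suc m) \<and>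
    B \<in> carrier_mat m m \<and> B\<^sup>T = B \<and>
    U\<^sup>T * A * U = four_block_mat (mat_diag 1 (\<lambda>_. e)) (0\<^sub>m 1 m) (0\<^sub>m m 1) B"
proof -
  obtain e v1 where v1: "v1 \<in> carrier_vec (Suc m)" "v1 \<bullet> v1 = 1" and Av1: "A *\<^sub>v v1 = e \<cdot>\<^sub>v v1"
    using real_symmetric_unit_eigenvector[OF A _ sym] by auto
  obtain U where U: "U \<in> carrier_mat (Suc m) (Suc m)" and UU: "U\<^sup>T * U = 1\<^sub>m (Suc m)"
    and U0: "col U 0 = v1"
    using orthonormal_completion[OF v1] by blast
  define A' where "A' = U\<^sup>T * A * U"
  have A': "A' \<in> carrier_mat (Suc m) (Suc m)" unfolding A'_def using U A by auto
  have A'T: "A'\<^sup>T = A'"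
    unfolding A'_def using U A sym
    by (simp add: transpose_mult[of _ "Suc m" "Suc m" _ "Suc m"] assoc_mult_mat[of _ "Suc m" "Suc m" _ "Suc m" _ "Suc m"])
  then have A'_sym: "A' $$ (i, j) = A' $$ (j, i)" if "i < Suc m" "j < Suc m" for i j
    using symmetric_mat_index[OF A'T] that A' by simp
  have A'_col0: "A' $$ (i, 0) = (if i = 0 then e else 0)" if "i < Suc m" for i
  proof -
    have "A' $$ (i, 0) = col U i \<bullet> (A *\<^sub>v col U 0)"
      unfolding A'_def using transpose_mult_mult_index[OF U A that] by simp
    also have "\<dots> = e * (col U i \<bullet> col U 0)"
      unfolding U0 Av1 using U that v1(1) by (simp add: scalar_prod_smult_distrib[of _ "Suc m"])
    also have "col U i \<bullet> col U 0 = (U\<^sup>T * U) $$ (i, 0)" using U that by simp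
    finally show ?thesis using UU that by simp
  qed
  define B where "B = mat m m (\<lambda>(i, j). A' $$ (Suc i, Suc j))"
  have "B\<^sup>T = B" unfolding B_def by (rule eq_matI) (auto simp: A'_sym)
  moreover have "A' = four_block_mat (mat_diag 1 (\<lambda>_. e)) (0\<^sub>m 1 m) (0\<^sub>m m 1) B"
    by (rule eq_matI) (use A' A'_col0 A'_sym in \<open>auto simp: B_def mat_diag_def\<close>)
  moreover have "B \<in> carrier_mat m m" unfolding B_def by simp
  ultimately show ?thesis unfolding A'_def using U UU by blast
qed

lemma four_block_mat_diag:
  "four_block_mat (mat_diag 1 (\<lambda>_. e)) (0\<^sub>m 1 m) (0\<^sub>m m 1) (mat_diag m (\<lambda>i. es ! i)) =
   mat_diag (Suc m) (\<lambda>i. (e # es) ! i)"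
  by (rule eq_matI) (auto simp: mat_diag_def nth_Cons')

lemma orthonormal_change_of_basis:
  fixes A :: "real mat"
  assumes A: "A \<in> carrier_mat n n" and U: "U \<in> carrier_mat n n" and W: "W \<in> carrier_mat n n"
    and D: "D \<in> carrier_mat n n"
    and UU: "U\<^sup>T * U = 1\<^sub>m n" and WW: "W\<^sup>T * W = 1\<^sub>m n" and UAUW: "(U\<^sup>T * A * U) * W = W * D"
  shows "(U * W)\<^sup>T * (U * W) = 1\<^sub>m n" and "A * (U * W) = (U * W) * D"
proof -
  note assoc = assoc_mult_mat[of _ n n _ n _ n]
  have "(U * W)\<^sup>T * (U * W) = W\<^sup>T * (U\<^sup>T * U) * W"
    using U W by (simp add: transpose_mult[of _ n n _ n] assoc)
  then show "(U * W)\<^sup>T * (U * W) = 1\<^sub>m n" using UU WW W by simp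
  have UUT: "U * U\<^sup>T = 1\<^sub>m n" using mat_mult_left_right_inverse[OF _ U UU] U by auto
  have "A * (U * W) = (U * U\<^sup>T) * A * U * W" using UUT A U W by (simp add: assoc)
  also have "\<dots> = U * ((U\<^sup>T * A * U) * W)" using A U W by (simp add: assoc)
  also have "\<dots> = (U * W) * D" unfolding UAUW using U W D by (simp add: assoc)
  finally show "A * (U * W) = (U * W) * D" .
qed

theorem real_symmetric_orthogonal_diagonalization:
  fixes A :: "real mat"
  assumes "A \<in> carrier_mat n n" and "A\<^sup>T = A"
  shows "\<exists>V es. V \<in> carrier_mat n n \<and> length es = n \<and> V\<^sup>T * V = 1\<^sub>m n \<and>
     A * V = V * mat_diag n (\<lambda>i. es ! i)"
  using assms
proof (induction n arbitrary: A)
  case 0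
  then show ?case by (intro exI[of _ "1\<^sub>m 0"] exI[of _ "[]"]) (auto intro!: eq_matI simp: mat_diag_def)
next
  case (Suc m)
  obtain U e B where U: "U \<in> carrier_mat (Suc m) (Suc m)" and UU: "U\<^sup>T * U = 1\<^sub>m (Suc m)"
    and B: "B \<in> carrier_mat m m" "B\<^sup>T = B"
    and UAU: "U\<^sup>T * A * U = four_block_mat (mat_diag 1 (\<lambda>_. e)) (0\<^sub>m 1 m) (0\<^sub>m m 1) B"
    using real_symmetric_deflation[OF Suc.prems] by blast
  obtain W es where W: "W \<in> carrier_mat m m" and les: "length es = m" and WW: "W\<^sup>T * W = 1\<^sub>m m"
    and BW: "B * W = W * mat_diag m (\<lambda>i. es ! i)"
    using Suc.IH[OF B] by blast
  define W' where "W' = four_block_mat (1\<^sub>m 1) (0\<^sub>m 1 m) (0\<^sub>m m 1) W"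
  define D where "D = mat_diag (Suc m) (\<lambda>i. (e # es) ! i)"
  have W': "W' \<in> carrier_mat (Suc m) (Suc m)" unfolding W'_def using W by auto
  have D: "D \<in> carrier_mat (Suc m) (Suc m)" unfolding D_def by simp
  have W'W': "W'\<^sup>T * W' = 1\<^sub>m (Suc m)"
    unfolding W'_def using W WW
    by (simp add: transpose_four_block_mat[of _ 1 1 _ m _ m] mult_four_block_mat[of _ 1 1 _ m _ m _ _ 1 _ m])
  have A'W': "(U\<^sup>T * A * U) * W' = W' * D"
    unfolding UAU W'_def D_def four_block_mat_diag[symmetric] using W B BW
    by (simp add: mult_four_block_mat[of _ 1 1 _ m _ m _ _ 1 _ m])
      (intro cong_four_block_mat; rule eq_matI; auto simp: mat_diag_def)
  then show ?case
    using orthonormal_change_of_basis[OF Suc.prems(1) U W' D UU W'W'] U W' les unfolding D_def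
    by (intro exI[of _ "U * W'"] exI[of _ "e # es"]) auto
qed

section \<open>The second eigenvalue\<close>

lemma card_nth_sort: "card {l. l < length xs \<and> P (sort xs ! l)} = card {l. l < length xs \<and> P (xs ! l)}"
proof -
  have "card {l. l < length xs \<and> P (sort xs ! l)} = length (filter P (sort xs))"
    by (simp add: length_filter_conv_card)
  also have "\<dots> = length (filter P xs)" by (simp add: filter_sort)
  finally show ?thesis by (simp add: length_filter_conv_card)
qed

lemma two_nth_le_sort_nth_1:
  fixes xs :: "'a :: linorder list"
  assumes "length xs \<ge> 2"
  shows "\<exists>i j. i < length xs \<and> j < length xs \<and> i \<noteq> j \<and> xs ! i \<le> sort xs ! 1 \<and> xs ! j \<le> sort xs ! 1"
proof -
  let ?S = "{l. l < length xs \<and> xs ! l \<le> sort xs ! 1}"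
  have "sort xs ! 0 \<le> sort xs ! 1" using assms by (intro sorted_nth_mono) auto
  then have "card {0, 1 :: nat} \<le> card {l. l < length xs \<and> sort xs ! l \<le> sort xs ! 1}"
    using assms by (intro card_mono) auto
  also have "\<dots> = card ?S" by (rule card_nth_sort)
  finally have "\<not> card ?S \<le> Suc 0" by simp
  then show ?thesis by (auto simp: card_le_Suc0_iff_eq)
qed

lemma sort_nth_1_le_all_but_one:
  fixes xs :: "'a :: linorder list"
  assumes "xs \<noteq> []"
  shows "\<exists>l0 < length xs. \<forall>l < length xs. l \<noteq> l0 \<longrightarrow> sort xs ! 1 \<le> xs ! l"
proof -
  let ?S = "{l. l < length xs \<and> xs ! l < sort xs ! 1}"
  have "l = 0" if "l < length xs" "sort xs ! l < sort xs ! 1" for l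
    using that sorted_nth_mono[of "sort xs" 1 l] by (cases l) auto
  then have "card {l. l < length xs \<and> sort xs ! l < sort xs ! 1} \<le> card {0 :: nat}"
    by (intro card_mono) auto
  then have "card ?S \<le> Suc 0" using card_nth_sort[of xs "\<lambda>x. x < sort xs ! 1"] by simp
  then have single: "a = b" if "a \<in> ?S" "b \<in> ?S" for a b
    using that by (simp add: card_le_Suc0_iff_eq)
  obtain l0 where l0: "l0 < length xs" "?S \<subseteq> {l0}"
  proof (cases "?S = {}")
    case True
    then show ?thesis using assms that[of 0] by auto
  next
    case False
    then obtain l0 where "l0 \<in> ?S" by blast
    then show ?thesis using single that[of l0] by blast
  qed
  then show ?thesis by (auto simp: not_less[symmetric])
qed

lemma proots_prod_linear_factors: "proots (\<Prod>a\<leftarrow>es. [:- a, 1:]) = mset (es :: real list)"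
proof (induction es)
  case (Cons a es)
  have "(\<Prod>a\<leftarrow>es. [:- a, 1:]) \<noteq> 0" by (auto simp: prod_list_zero_iff)
  then have "proots ([:- a, 1:] * (\<Prod>a\<leftarrow>es. [:- a, 1:])) = proots [:- a, 1:] + mset es"
    using Cons by (subst proots_mult) auto
  then show ?case using proots_linear_factor[of "- a"] by simp
qed simp

lemma sum_if_two_points:
  assumes "finite S" "i \<in> S" "j \<in> S" "i \<noteq> j"
  shows "(\<Sum>l\<in>S. if l = i then a else if l = j then b else 0) = a + (b :: 'a :: comm_monoid_add)"
proof -
  have "(\<Sum>l\<in>S. if l = i then a else if l = j then b else 0) =
    (\<Sum>l\<in>S. (if l = i then a else 0) + (if l = j then b else 0))"
    by (rule sum.cong) (use assms in auto)
  then show ?thesis using assms by (simp add: sum.distrib)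
qed

lemma exists_nontrivial_solution:
  fixes p q :: real
  shows "\<exists>a b. (a \<noteq> 0 \<or> b \<noteq> 0) \<and> p * a + q * b = 0"
proof (cases "p = 0 \<and> q = 0")
  case True
  then show ?thesis by (intro exI[of _ 1] exI[of _ 0]) simp
next
  case False
  then show ?thesis by (intro exI[of _ q] exI[of _ "- p"]) (auto simp: mult.commute)
qed

locale orthonormal_eigenbasis =
  fixes A V :: "real mat" and es :: "real list" and n :: nat
  assumes A: "A \<in> carrier_mat n n" and V: "V \<in> carrier_mat n n" and length_es: "length es = n"
    and orthonormal: "V\<^sup>T * V = 1\<^sub>m n" and eigen: "A * V = V * mat_diag n (\<lambda>i. es ! i)"
begin

lemma coords_inverse: "z \<in> carrier_vec n \<Longrightarrow> V *\<^sub>v (V\<^sup>T *\<^sub>v z) = z"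
  using mat_mult_left_right_inverse[OF _ V orthonormal] V
  by (metis assoc_mult_mat_vec one_mult_mat_vec transpose_carrier_mat)

lemma coords_of_basis: "c \<in> carrier_vec n \<Longrightarrow> V\<^sup>T *\<^sub>v (V *\<^sub>v c) = c"
  using V orthonormal by (metis assoc_mult_mat_vec one_mult_mat_vec transpose_carrier_mat)

lemma norm_in_coords:
  assumes c: "c \<in> carrier_vec n"
  shows "(V *\<^sub>v c) \<bullet> (V *\<^sub>v c) = c \<bullet> c"
proof -
  have "(V\<^sup>T *\<^sub>v (V *\<^sub>v c)) \<bullet> c = (V *\<^sub>v c) \<bullet> (V *\<^sub>v c)"
    by (rule transpose_vec_mult_scalar[OF V c]) (use V c in auto)
  then show ?thesis using coords_of_basis[OF c] by simp
qed

lemma quadratic_form_in_coords: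
  assumes c: "c \<in> carrier_vec n"
  shows "(V *\<^sub>v c) \<bullet> (A *\<^sub>v (V *\<^sub>v c)) = (\<Sum>l=0..<n. es ! l * (c $ l)\<^sup>2)"
proof -
  let ?D = "mat_diag n (\<lambda>i. es ! i)"
  have Dc: "?D *\<^sub>v c = vec n (\<lambda>l. es ! l * c $ l)"
  proof (rule eq_vecI)
    fix i assume "i < dim_vec (vec n (\<lambda>l. es ! l * c $ l))"
    then have i: "i < n" by simp
    have "(?D *\<^sub>v c) $ i = (\<Sum>j=0..<n. (if i = j then es ! j else 0) * c $ j)"
      using i c by (simp add: mat_diag_def scalar_prod_def)
    also have "\<dots> = (\<Sum>j=0..<n. if i = j then es ! j * c $ j else 0)" by (rule sum.cong) auto
    finally show "(?D *\<^sub>v c) $ i = vec n (\<lambda>l. es ! l * c $ l) $ i" using i by simp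
  qed (simp add: mat_diag_def)
  have "A *\<^sub>v (V *\<^sub>v c) = V *\<^sub>v (?D *\<^sub>v c)"
    by (metis eigen A V c assoc_mult_mat_vec mat_diag_dim)
  then have "(V *\<^sub>v c) \<bullet> (A *\<^sub>v (V *\<^sub>v c)) = (V\<^sup>T *\<^sub>v (V *\<^sub>v c)) \<bullet> (?D *\<^sub>v c)"
    using transpose_vec_mult_scalar[OF V mult_mat_vec_carrier[OF mat_diag_dim c], of "V *\<^sub>v c"] V c
    by simp
  also have "\<dots> = (\<Sum>l=0..<n. es ! l * (c $ l)\<^sup>2)"
    unfolding coords_of_basis[OF c] Dc using c by (simp add: scalar_prod_def power2_eq_square mult_ac)
  finally show ?thesis .
qed

lemma lambda2_eq: "lambda2 A = sort es ! 1"
proof -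
  let ?D = "mat_diag n (\<lambda>i. es ! i)"
  have VVT: "V * V\<^sup>T = 1\<^sub>m n" using mat_mult_left_right_inverse[OF _ V orthonormal] V by auto
  have "A = (A * V) * V\<^sup>T" using A V VVT by (simp add: assoc_mult_mat[of _ n n _ n _ n])
  then have "similar_mat_wit A ?D V V\<^sup>T"
    unfolding eigen by (intro similar_mat_witI[OF VVT orthonormal _ A]) (use V in auto)
  then have "similar_mat A ?D" unfolding similar_mat_def by blast
  then have "char_poly A = char_poly ?D" by (rule char_poly_similar)
  also have "\<dots> = (\<Prod>a\<leftarrow>diag_mat ?D. [:- a, 1:])"
    by (rule char_poly_upper_triangular) (auto simp: upper_triangular_def mat_diag_def)
  also have "diag_mat ?D = es"
    using length_es by (intro nth_equalityI) (auto simp: diag_mat_def mat_diag_def)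
  finally show ?thesis
    unfolding lambda2_def sorted_eigenvalues_def by (simp add: proots_prod_linear_factors)
qed

lemma combination_of_two_eigenvectors:
  fixes \<alpha> \<beta> :: real
  assumes ij: "i < n" "j < n" "i \<noteq> j"
  defines "c \<equiv> vec n (\<lambda>l. if l = i then \<alpha> else if l = j then \<beta> else 0)"
  shows "V *\<^sub>v c \<in> carrier_vec n"
    and "(V *\<^sub>v c) \<bullet> (V *\<^sub>v c) = \<alpha>\<^sup>2 + \<beta>\<^sup>2"
    and "(V *\<^sub>v c) \<bullet> (A *\<^sub>v (V *\<^sub>v c)) = es ! i * \<alpha>\<^sup>2 + es ! j * \<beta>\<^sup>2"
    and "u \<in> carrier_vec n \<Longrightarrow> u \<bullet> (V *\<^sub>v c) = (col V i \<bullet> u) * \<alpha> + (col V j \<bullet> u) * \<beta>"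
proof -
  have c: "c \<in> carrier_vec n" unfolding c_def by simp
  have c_sum: "(\<Sum>l=0..<n. g l * f (c $ l)) = g i * f \<alpha> + g j * f \<beta>"
    if "f 0 = 0" for g :: "nat \<Rightarrow> real" and f :: "real \<Rightarrow> real"
  proof -
    have "(\<Sum>l=0..<n. g l * f (c $ l)) =
      (\<Sum>l=0..<n. if l = i then g i * f \<alpha> else if l = j then g j * f \<beta> else 0)"
      unfolding c_def using that by (intro sum.cong) auto
    then show ?thesis using ij by (simp add: sum_if_two_points)
  qed
  show "V *\<^sub>v c \<in> carrier_vec n" using V c by simp
  show "(V *\<^sub>v c) \<bullet> (V *\<^sub>v c) = \<alpha>\<^sup>2 + \<beta>\<^sup>2"
    using norm_in_coords[OF c] c_sum[of "\<lambda>x. x\<^sup>2" "\<lambda>_. 1"] c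
    by (simp add: scalar_prod_def power2_eq_square)
  show "(V *\<^sub>v c) \<bullet> (A *\<^sub>v (V *\<^sub>v c)) = es ! i * \<alpha>\<^sup>2 + es ! j * \<beta>\<^sup>2"
    unfolding quadratic_form_in_coords[OF c] by (rule c_sum) simp
  assume u: "u \<in> carrier_vec n"
  have "u \<bullet> (V *\<^sub>v c) = (V\<^sup>T *\<^sub>v u) \<bullet> c"
    by (rule transpose_vec_mult_scalar[OF V c u, symmetric])
  also have "\<dots> = (V\<^sup>T *\<^sub>v u) $ i * \<alpha> + (V\<^sup>T *\<^sub>v u) $ j * \<beta>"
    unfolding scalar_prod_def using c_sum[of id "\<lambda>l. (V\<^sup>T *\<^sub>v u) $ l"] c by simp
  also have "\<dots> = (col V i \<bullet> u) * \<alpha> + (col V j \<bullet> u) * \<beta>" using V u ij by simp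
  finally show "u \<bullet> (V *\<^sub>v c) = (col V i \<bullet> u) * \<alpha> + (col V j \<bullet> u) * \<beta>" .
qed

lemma lambda2_ge:
  assumes n: "n \<ge> 2" and u: "u \<in> carrier_vec n"
    and rayleigh: "\<And>z. z \<in> carrier_vec n \<Longrightarrow> z \<noteq> 0\<^sub>v n \<Longrightarrow> u \<bullet> z = 0 \<Longrightarrow>
      t * (z \<bullet> z) \<le> z \<bullet> (A *\<^sub>v z)"
  shows "t \<le> lambda2 A"
proof -
  \<comment> \<open>The plane spanned by two eigenvectors with eigenvalues \<open>\<le> \<lambda>\<^sub>2\<close> meets the hyperplane \<open>u\<^sup>\<bottom>\<close>.\<close>
  obtain i j where ij: "i < n" "j < n" "i \<noteq> j" and le: "es ! i \<le> lambda2 A" "es ! j \<le> lambda2 A"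
    using two_nth_le_sort_nth_1[of es] n length_es lambda2_eq by auto
  obtain \<alpha> \<beta> where nontrivial: "\<alpha> \<noteq> 0 \<or> \<beta> \<noteq> 0"
    and orth: "(col V i \<bullet> u) * \<alpha> + (col V j \<bullet> u) * \<beta> = 0"
    using exists_nontrivial_solution by blast
  define z where "z = V *\<^sub>v vec n (\<lambda>l. if l = i then \<alpha> else if l = j then \<beta> else 0)"
  note z = combination_of_two_eigenvectors[OF ij, where \<alpha> = \<alpha> and \<beta> = \<beta>, folded z_def]
  have N: "\<alpha>\<^sup>2 + \<beta>\<^sup>2 > 0" using nontrivial by (simp add: sum_power2_gt_zero_iff)
  then have "z \<noteq> 0\<^sub>v n" using z(2) by auto
  then have "t * (\<alpha>\<^sup>2 + \<beta>\<^sup>2) \<le> z \<bullet> (A *\<^sub>v z)" using rayleigh[OF z(1)] z(2) z(4)[OF u] orth by simp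
  also have "\<dots> \<le> lambda2 A * (\<alpha>\<^sup>2 + \<beta>\<^sup>2)"
    using le z(3) by (simp add: distrib_left add_mono mult_right_mono)
  finally show ?thesis using N by simp
qed

lemma lambda2_le:
  assumes n: "n > 0" and x1: "x1 \<in> carrier_vec n" and x2: "x2 \<in> carrier_vec n"
    and rayleigh: "\<And>a b. a \<noteq> 0 \<or> b \<noteq> 0 \<Longrightarrow> a \<cdot>\<^sub>v x1 + b \<cdot>\<^sub>v x2 \<noteq> 0\<^sub>v n \<and>
      (a \<cdot>\<^sub>v x1 + b \<cdot>\<^sub>v x2) \<bullet> (A *\<^sub>v (a \<cdot>\<^sub>v x1 + b \<cdot>\<^sub>v x2)) \<le>
      t * ((a \<cdot>\<^sub>v x1 + b \<cdot>\<^sub>v x2) \<bullet> (a \<cdot>\<^sub>v x1 + b \<cdot>\<^sub>v x2))"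
  shows "lambda2 A \<le> t"
proof -
  \<comment> \<open>All eigenvalues but one are \<open>\<ge> \<lambda>\<^sub>2\<close>; the plane meets the orthogonal complement of that one.\<close>
  obtain l0 where l0: "l0 < n" and ge: "\<And>l. l < n \<Longrightarrow> l \<noteq> l0 \<Longrightarrow> lambda2 A \<le> es ! l"
    using sort_nth_1_le_all_but_one[of es] n length_es lambda2_eq by auto
  define w where "w = col V l0"
  have w: "w \<in> carrier_vec n" unfolding w_def using V l0 by simp
  obtain a b where "a \<noteq> 0 \<or> b \<noteq> 0" and orth: "(w \<bullet> x1) * a + (w \<bullet> x2) * b = 0"
    using exists_nontrivial_solution by blast
  define z where "z = a \<cdot>\<^sub>v x1 + b \<cdot>\<^sub>v x2"
  have z: "z \<in> carrier_vec n" unfolding z_def using x1 x2 by simp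
  have z0: "z \<noteq> 0\<^sub>v n" and Q: "z \<bullet> (A *\<^sub>v z) \<le> t * (z \<bullet> z)"
    using rayleigh[OF \<open>a \<noteq> 0 \<or> b \<noteq> 0\<close>] unfolding z_def by auto
  have "w \<bullet> z = (w \<bullet> x1) * a + (w \<bullet> x2) * b"
    unfolding z_def using w x1 x2 by (simp add: scalar_prod_add_distrib[of _ n] mult.commute)
  then have wz: "w \<bullet> z = 0" using orth by simp
  define c where "c = V\<^sup>T *\<^sub>v z"
  have c: "c \<in> carrier_vec n" unfolding c_def using V z by simp
  have zc: "z = V *\<^sub>v c" unfolding c_def using coords_inverse[OF z] by simp
  have c_l0: "c $ l0 = 0" unfolding c_def using wz w_def V z l0 by simp
  have "lambda2 A * (z \<bullet> z) = (\<Sum>l=0..<n. lambda2 A * (c $ l)\<^sup>2)"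
    unfolding zc norm_in_coords[OF c] using c by (simp add: scalar_prod_def sum_distrib_left power2_eq_square)
  also have "\<dots> \<le> (\<Sum>l=0..<n. es ! l * (c $ l)\<^sup>2)"
  proof (rule sum_mono)
    fix l assume "l \<in> {0..<n}"
    then show "lambda2 A * (c $ l)\<^sup>2 \<le> es ! l * (c $ l)\<^sup>2"
      using ge c_l0 by (cases "l = l0") (auto intro: mult_right_mono)
  qed
  also have "\<dots> = z \<bullet> (A *\<^sub>v z)" unfolding zc quadratic_form_in_coords[OF c] ..
  finally have "lambda2 A * (z \<bullet> z) \<le> t * (z \<bullet> z)" using Q by simp
  then show ?thesis using real_sprod_self_pos[OF z z0] by simp
qed

end

lemma real_symmetric_orthonormal_eigenbasis:
  fixes A :: "real mat"
  assumes "A \<in> carrier_mat n n" and "A\<^sup>T = A"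
  obtains V es where "orthonormal_eigenbasis A V es n"
  using real_symmetric_orthogonal_diagonalization[OF assms] assms(1)
  unfolding orthonormal_eigenbasis_def by blast

section \<open>The quadratic form of the Octopus Laplacian\<close>

lemma octo_laplacian_carrier: "octo_laplacian k d \<in> carrier_mat k k"
  by (simp add: octo_laplacian_def)

lemma octo_adj_sym: "octo_adj k d i j = octo_adj k d j i"
  unfolding octo_adj_def by auto

lemma octo_laplacian_symmetric: "(octo_laplacian k d)\<^sup>T = octo_laplacian k d"
  by (rule eq_matI) (auto simp: octo_laplacian_def octo_adj_sym)

lemma octo_degree_eq_sum:
  "real (octo_degree k d (Suc i)) = (\<Sum>j=0..<k. of_bool (octo_adj k d (Suc i) (Suc j)))"
proof -
  have "{j \<in> {1..k}. octo_adj k d (Suc i) j} = Suc ` {j \<in> {0..<k}. octo_adj k d (Suc i) (Suc j)}"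
    by (auto simp: image_iff Suc_le_eq gr0_conv_Suc)
  then have "octo_degree k d (Suc i) = card {j \<in> {0..<k}. octo_adj k d (Suc i) (Suc j)}"
    unfolding octo_degree_def by (simp add: card_image)
  then have "real (octo_degree k d (Suc i)) = (\<Sum>j \<in> {j \<in> {0..<k}. octo_adj k d (Suc i) (Suc j)}. 1)"
    by simp
  also have "\<dots> = (\<Sum>j=0..<k. of_bool (octo_adj k d (Suc i) (Suc j)))"
    unfolding of_bool_def by (rule sum.inter_filter) simp
  finally show ?thesis .
qed

lemma octo_laplacian_mult_vec:
  assumes x: "x \<in> carrier_vec k" and i: "i < k"
  shows "(octo_laplacian k d *\<^sub>v x) $ i = (\<Sum>j=0..<k. of_bool (octo_adj k d (Suc i) (Suc j)) * (x $ i - x $ j))"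
proof -
  let ?a = "\<lambda>j. of_bool (octo_adj k d (Suc i) (Suc j)) :: real"
  have "(octo_laplacian k d *\<^sub>v x) $ i = (\<Sum>j=0..<k. octo_laplacian k d $$ (i, j) * x $ j)"
    using x i octo_laplacian_carrier[of k d] by (simp add: scalar_prod_def)
  also have "\<dots> = (\<Sum>j=0..<k. (if j = i then (\<Sum>l=0..<k. ?a l) * x $ i else 0) - ?a j * x $ j)"
    by (intro sum.cong refl)
      (use i in \<open>auto simp: octo_laplacian_def octo_degree_eq_sum octo_adj_def octo_edge_lt_def\<close>)
  also have "\<dots> = (\<Sum>j=0..<k. ?a j * (x $ i - x $ j))"
    using i by (simp add: sum_subtractf right_diff_distrib sum_distrib_right)
  finally show ?thesis .
qed

lemma octo_laplacian_quadratic_form_arcs: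
  assumes x: "x \<in> carrier_vec k"
  shows "x \<bullet> (octo_laplacian k d *\<^sub>v x) =
    (\<Sum>i<k. \<Sum>j<k. of_bool (octo_edge_lt k d (Suc i) (Suc j)) * (x $ i - x $ j)\<^sup>2)"
proof -
  let ?e = "\<lambda>i j. of_bool (octo_edge_lt k d (Suc i) (Suc j)) :: real"
  have adj: "of_bool (octo_adj k d (Suc i) (Suc j)) = ?e i j + ?e j i" for i j
    unfolding octo_adj_def octo_edge_lt_def by auto
  have "x \<bullet> (octo_laplacian k d *\<^sub>v x) = (\<Sum>i<k. \<Sum>j<k. (?e i j + ?e j i) * (x $ i * (x $ i - x $ j)))"
    using x octo_laplacian_carrier[of k d]
    by (simp add: scalar_prod_def octo_laplacian_mult_vec adj sum_distrib_left atLeast0LessThan mult_ac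
        del: index_mult_mat_vec)
  also have "\<dots> = (\<Sum>i<k. \<Sum>j<k. ?e i j * (x $ i * (x $ i - x $ j))) +
      (\<Sum>i<k. \<Sum>j<k. ?e j i * (x $ i * (x $ i - x $ j)))"
    by (simp add: distrib_right sum.distrib)
  also have "(\<Sum>i<k. \<Sum>j<k. ?e j i * (x $ i * (x $ i - x $ j))) =
      (\<Sum>i<k. \<Sum>j<k. ?e i j * (x $ j * (x $ j - x $ i)))"
    by (rule sum.swap)
  also have "(\<Sum>i<k. \<Sum>j<k. ?e i j * (x $ i * (x $ i - x $ j))) + \<dots> =
      (\<Sum>i<k. \<Sum>j<k. ?e i j * (x $ i - x $ j)\<^sup>2)"
    by (simp add: sum.distrib[symmetric] power2_eq_square algebra_simps)
  finally show ?thesis .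
qed

lemma sum_octo_arcs:
  fixes f :: "nat \<Rightarrow> nat \<Rightarrow> real"
  shows "(\<Sum>i<Suc m. \<Sum>j<Suc m. of_bool (octo_edge_lt (Suc m) d (Suc i) (Suc j)) * f i j) =
   (\<Sum>i<m. (if Suc i mod d = 1 mod d then f i m else 0) +
      (if Suc i < m \<and> Suc i mod d \<noteq> 0 then f i (Suc i) else 0))"
proof -
  have "(\<Sum>j<Suc m. of_bool (octo_edge_lt (Suc m) d (Suc i) (Suc j)) * f i j) =
    (if i < m \<and> Suc i mod d = 1 mod d then f i m else 0) +
    (if Suc i < m \<and> Suc i mod d \<noteq> 0 then f i (Suc i) else 0)" for i
  proof -
    have "(\<Sum>j<Suc m. of_bool (octo_edge_lt (Suc m) d (Suc i) (Suc j)) * f i j) =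
      (\<Sum>j<Suc m. (if j = m then (if i < m \<and> Suc i mod d = 1 mod d then f i m else 0) else 0) +
        (if j = Suc i then (if Suc i < m \<and> Suc i mod d \<noteq> 0 then f i (Suc i) else 0) else 0))"
      by (intro sum.cong refl) (auto simp: octo_edge_lt_def)
    then show ?thesis by (simp add: sum.distrib)
  qed
  then show ?thesis by simp
qed

lemma sum_lessThan_mult_blocks:
  fixes r d :: nat
  shows "(\<Sum>i<r * d. g i) = (\<Sum>a<r. \<Sum>p<d. g (a * d + p))"
proof -
  have "(\<Sum>p<d. g (a * d + p)) = sum g {a * d..<a * d + d}" for a
    using sum.shift_bounds_nat_ivl[of g 0 "a * d" d] by (simp add: atLeast0LessThan add.commute)
  then show ?thesis by (simp add: sum.nat_group[symmetric])
qed

lemma mult_add_le_mult_of_less: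
  fixes a r d :: nat
  shows "a < r \<Longrightarrow> a * d + d \<le> r * d"
  using mult_le_mono1[of "Suc a" r d] by simp

text \<open>
  With \<open>k = r * d + 1\<close> nodes, matrix index \<open>i\<close> is node \<open>i + 1\<close> of the paper: arm \<open>a < r\<close> occupies
  the indices \<open>a * d, \<dots>, a * d + d - 1\<close>, its first node is joined to the centre \<open>r * d\<close>.
\<close>
definition octo_energy :: "nat \<Rightarrow> nat \<Rightarrow> (nat \<Rightarrow> real) \<Rightarrow> real" where
  "octo_energy r d x =
    (\<Sum>a<r. (x (a * d) - x (r * d))\<^sup>2 + (\<Sum>p<d - 1. (x (a * d + Suc p) - x (a * d + p))\<^sup>2))"

lemma mod_Suc_mult_add:
  fixes a d p :: nat
  assumes "p < d"
  shows "Suc (a * d + p) mod d = 1 mod d \<longleftrightarrow> p = 0"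
    and "Suc (a * d + p) mod d = 0 \<longleftrightarrow> Suc p = d"
proof -
  have "Suc (a * d + p) mod d = Suc p mod d" by (simp add: mod_add_left_eq[symmetric] add.commute[of "a * d"])
  moreover have "Suc p mod d = (if Suc p = d then 0 else Suc p)" using assms by auto
  ultimately show "Suc (a * d + p) mod d = 1 mod d \<longleftrightarrow> p = 0" and "Suc (a * d + p) mod d = 0 \<longleftrightarrow> Suc p = d"
    using assms by (auto simp: mod_if)
qed

lemma octo_laplacian_quadratic_form:
  assumes d: "d \<ge> 1" and x: "x \<in> carrier_vec (Suc (r * d))"
  shows "x \<bullet> (octo_laplacian (Suc (r * d)) d *\<^sub>v x) = octo_energy r d (\<lambda>i. x $ i)"
proof -
  let ?m = "r * d"
  define g where "g i = (if Suc i mod d = 1 mod d then (x $ i - x $ ?m)\<^sup>2 else 0) +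
    (if Suc i < ?m \<and> Suc i mod d \<noteq> 0 then (x $ i - x $ Suc i)\<^sup>2 else 0)" for i
  have arm: "(\<Sum>p<d. g (a * d + p)) =
    (x $ (a * d) - x $ ?m)\<^sup>2 + (\<Sum>p<d - 1. (x $ (a * d + Suc p) - x $ (a * d + p))\<^sup>2)"
    if a: "a < r" for a
  proof -
    have "a * d + d \<le> ?m" using a by (rule mult_add_le_mult_of_less)
    then have "g (a * d + p) = (if p = 0 then (x $ (a * d) - x $ ?m)\<^sup>2 else 0) +
      (if Suc p < d then (x $ (a * d + Suc p) - x $ (a * d + p))\<^sup>2 else 0)" if "p < d" for p
      using mod_Suc_mult_add[OF that, of a] that by (auto simp: g_def power2_commute)
    then have "(\<Sum>p<d. g (a * d + p)) = (\<Sum>p<d. (if p = 0 then (x $ (a * d) - x $ ?m)\<^sup>2 else 0)) +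
      (\<Sum>p<d. if Suc p < d then (x $ (a * d + Suc p) - x $ (a * d + p))\<^sup>2 else 0)"
      by (simp add: sum.distrib)
    moreover have "{p. p < d \<and> Suc p < d} = {..<d - 1}" by auto
    ultimately show ?thesis using d by (simp add: sum.inter_filter[symmetric])
  qed
  have "x \<bullet> (octo_laplacian (Suc ?m) d *\<^sub>v x) = (\<Sum>i<?m. g i)"
    unfolding octo_laplacian_quadratic_form_arcs[OF x] sum_octo_arcs g_def by simp
  also have "\<dots> = (\<Sum>a<r. \<Sum>p<d. g (a * d + p))" by (rule sum_lessThan_mult_blocks)
  also have "\<dots> = octo_energy r d (\<lambda>i. x $ i)" unfolding octo_energy_def by (simp add: arm)
  finally show ?thesis .
qed

lemma octo_energy_cong:
  assumes "\<And>i. i \<le> r * d \<Longrightarrow> x i = y i"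
  shows "octo_energy r d x = octo_energy r d y"
proof -
  have "(x (a * d) - x (r * d))\<^sup>2 + (\<Sum>p<d - 1. (x (a * d + Suc p) - x (a * d + p))\<^sup>2) =
    (y (a * d) - y (r * d))\<^sup>2 + (\<Sum>p<d - 1. (y (a * d + Suc p) - y (a * d + p))\<^sup>2)"
    if "a < r" for a
  proof -
    have "a * d + d \<le> r * d" using that by (rule mult_add_le_mult_of_less)
    moreover have "x (a * d) = y (a * d)" by (rule assms) (use \<open>a * d + d \<le> r * d\<close> in linarith)
    ultimately show ?thesis using assms by (intro arg_cong2[where f = "(+)"] sum.cong) auto
  qed
  then show ?thesis unfolding octo_energy_def by (intro sum.cong) auto
qed

lemma octo_energy_affine: "octo_energy r d (\<lambda>i. a + b * x i) = b\<^sup>2 * octo_energy r d x"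
  by (simp add: octo_energy_def power2_eq_square algebra_simps sum_distrib_left sum.distrib)

section \<open>A Poincare inequality on the arms\<close>

lemma square_sum_le_mult_sum_squares:
  fixes h :: "nat \<Rightarrow> real"
  shows "(\<Sum>q<n. h q)\<^sup>2 \<le> real n * (\<Sum>q<n. (h q)\<^sup>2)"
proof -
  have "0 \<le> (\<Sum>i<n. \<Sum>j<n. (h i - h j)\<^sup>2)" by (intro sum_nonneg) auto
  also have "\<dots> = 2 * (real n * (\<Sum>q<n. (h q)\<^sup>2)) - 2 * (\<Sum>q<n. h q)\<^sup>2"
    by (simp add: power2_diff sum.distrib sum_subtractf sum_distrib_left sum_distrib_right
        power2_eq_square algebra_simps)
  finally show ?thesis by simp
qed

lemma sum_power2_le_sum_power2_diff:
  fixes x :: "nat \<Rightarrow> real"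
  assumes "(\<Sum>i\<in>I. x i) = 0"
  shows "(\<Sum>i\<in>I. (x i)\<^sup>2) \<le> (\<Sum>i\<in>I. (x i - c)\<^sup>2)"
proof -
  have "(\<Sum>i\<in>I. (x i - c)\<^sup>2) = (\<Sum>i\<in>I. (x i)\<^sup>2) - 2 * c * (\<Sum>i\<in>I. x i) + real (card I) * c\<^sup>2"
    by (simp add: power2_diff sum.distrib sum_subtractf sum_distrib_left sum_distrib_right mult_ac)
  then show ?thesis using assms by simp
qed

lemma path_poincare:
  fixes x :: "nat \<Rightarrow> real"
  shows "(\<Sum>p<d. (x p - c)\<^sup>2) \<le> real d ^ 2 * ((x 0 - c)\<^sup>2 + (\<Sum>p<d - 1. (x (Suc p) - x p)\<^sup>2))"
proof (cases d)
  case (Suc d')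
  define h where "h q = (if q = 0 then x 0 - c else x q - x (q - 1))" for q
  have telescope: "x p - c = (\<Sum>q<Suc p. h q)" for p
    by (induction p) (simp_all add: h_def)
  have H: "(\<Sum>q<d. (h q)\<^sup>2) = (x 0 - c)\<^sup>2 + (\<Sum>p<d - 1. (x (Suc p) - x p)\<^sup>2)"
    unfolding Suc sum.lessThan_Suc_shift by (simp add: h_def)
  have "(\<Sum>p<d. (x p - c)\<^sup>2) \<le> (\<Sum>p<d. real (Suc p) * (\<Sum>q<Suc p. (h q)\<^sup>2))"
    unfolding telescope by (intro sum_mono square_sum_le_mult_sum_squares)
  also have "\<dots> \<le> (\<Sum>p<d. real d * (\<Sum>q<d. (h q)\<^sup>2))"
    by (intro sum_mono mult_mono sum_mono2 sum_nonneg) auto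
  also have "\<dots> = real d ^ 2 * (\<Sum>q<d. (h q)\<^sup>2)" by (simp add: power2_eq_square)
  finally show ?thesis unfolding H .
qed simp

lemma octo_poincare:
  fixes x :: "nat \<Rightarrow> real"
  assumes "(\<Sum>i<Suc (r * d). x i) = 0"
  shows "(\<Sum>i<Suc (r * d). (x i)\<^sup>2) \<le> real d ^ 2 * octo_energy r d x"
proof -
  let ?c = "x (r * d)"
  have "(\<Sum>i<Suc (r * d). (x i)\<^sup>2) \<le> (\<Sum>i<Suc (r * d). (x i - ?c)\<^sup>2)"
    by (rule sum_power2_le_sum_power2_diff[OF assms])
  also have "\<dots> = (\<Sum>a<r. \<Sum>p<d. (x (a * d + p) - ?c)\<^sup>2)"
    by (simp add: sum_lessThan_mult_blocks)
  also have "\<dots> \<le> (\<Sum>a<r. real d ^ 2 * ((x (a * d) - ?c)\<^sup>2 +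
      (\<Sum>p<d - 1. (x (a * d + Suc p) - x (a * d + p))\<^sup>2)))"
  proof (rule sum_mono)
    fix a show "(\<Sum>p<d. (x (a * d + p) - ?c)\<^sup>2) \<le> real d ^ 2 * ((x (a * d) - ?c)\<^sup>2 +
      (\<Sum>p<d - 1. (x (a * d + Suc p) - x (a * d + p))\<^sup>2))"
      using path_poincare[of "\<lambda>p. x (a * d + p)" ?c d] by simp
  qed
  also have "\<dots> = real d ^ 2 * octo_energy r d x"
    unfolding octo_energy_def by (rule sum_distrib_left[symmetric])
  finally show ?thesis .
qed

section \<open>The ramp on one arm\<close>

lemma octo_energy_ramp:
  assumes d: "d \<ge> 1" and r: "r \<ge> 1"
  shows "octo_energy r d (\<lambda>i. if i < d then real (Suc i) else 0) = real d"
proof -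
  define y where "y i = (if i < d then real (Suc i) else 0)" for i
  have centre: "y (r * d) = 0" using r by (simp add: y_def)
  have "(y (a * d) - y (r * d))\<^sup>2 + (\<Sum>p<d - 1. (y (a * d + Suc p) - y (a * d + p))\<^sup>2) =
    (if a = 0 then real d else 0)" for a
  proof (cases a)
    case 0
    have "(\<Sum>p<d - 1. (y (Suc p) - y p)\<^sup>2) = (\<Sum>p<d - 1. 1)" by (intro sum.cong) (auto simp: y_def)
    then show ?thesis using 0 d centre by (simp add: y_def of_nat_diff)
  next
    case (Suc a')
    then have "a * d \<ge> d" by simp
    then show ?thesis using centre Suc by (simp add: y_def)
  qed
  then show ?thesis using r unfolding octo_energy_def y_def[symmetric] by simp
qed

lemma ramp_centered_sum_squares:
  fixes d k :: nat
  assumes d: "d \<ge> 1" and dk: "d < k"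
  defines "y \<equiv> \<lambda>i. if i < d then real (Suc i) else 0"
  defines "\<mu> \<equiv> (\<Sum>i<k. y i) / real k"
  shows "real d ^ 3 \<le> 12 * (\<Sum>i<k. (y i - \<mu>)\<^sup>2)"
proof -
  have trunc: "(\<Sum>i<k. if i < d then f i else 0) = (\<Sum>i<d. f i)" for f :: "nat \<Rightarrow> real"
  proof -
    have "{i \<in> {..<k}. i < d} = {..<d}" using dk by auto
    then show ?thesis by (simp add: sum.inter_filter[symmetric])
  qed
  define S1 where "S1 = (\<Sum>i<k. y i)"
  define S2 where "S2 = (\<Sum>i<k. (y i)\<^sup>2)"
  have "(\<Sum>i<d. real (Suc i)) = real d * (real d + 1) / 2"
    by (induction d) (simp_all add: field_simps)
  then have S1: "S1 = real d * (real d + 1) / 2" unfolding S1_def y_def trunc .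
  have "(\<Sum>i<d. (real (Suc i))\<^sup>2) = real d * (real d + 1) * (2 * real d + 1) / 6"
    by (induction d) (simp_all add: field_simps power2_eq_square)
  moreover have "S2 = (\<Sum>i<k. if i < d then (real (Suc i))\<^sup>2 else 0)"
    unfolding S2_def y_def by (intro sum.cong) auto
  ultimately have S2: "S2 = real d * (real d + 1) * (2 * real d + 1) / 6" by (simp add: trunc)
  have k: "real k \<ge> real d + 1" using dk by simp
  have "(\<Sum>i<k. (y i - \<mu>)\<^sup>2) = S2 - 2 * \<mu> * S1 + real k * \<mu>\<^sup>2"
    unfolding S1_def S2_def by (simp add: power2_diff sum.distrib sum_subtractf sum_distrib_left mult_ac)
  also have "\<dots> = S2 - S1\<^sup>2 / real k"
    unfolding \<mu>_def S1_def[symmetric] using k by (simp add: field_simps power2_eq_square)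
  finally have N: "(\<Sum>i<k. (y i - \<mu>)\<^sup>2) = S2 - S1\<^sup>2 / real k" .
  have "S1\<^sup>2 / real k \<le> S1\<^sup>2 / (real d + 1)" using k by (intro divide_left_mono) auto
  also have "\<dots> = real d ^ 2 * (real d + 1) / 4" unfolding S1 by (simp add: field_simps power2_eq_square)
  finally have "12 * (\<Sum>i<k. (y i - \<mu>)\<^sup>2) \<ge> 12 * S2 - 3 * real d ^ 2 * (real d + 1)"
    unfolding N by simp
  moreover have "12 * S2 - 3 * real d ^ 2 * (real d + 1) = real d * (real d + 1) * (real d + 2)"
    unfolding S2 by (simp add: field_simps power2_eq_square)
  moreover have "real d ^ 3 \<le> real d * (real d + 1) * (real d + 2)"
    by (simp add: power3_eq_cube field_simps)
  ultimately show ?thesis by linarith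
qed

section \<open>Bounds on the second eigenvalue\<close>

lemma octo_lambda2_ge:
  assumes d: "d \<ge> 1" and r: "r \<ge> 1"
  shows "1 / real d ^ 2 \<le> lambda2 (octo_laplacian (Suc (r * d)) d)"
proof -
  let ?k = "Suc (r * d)" and ?L = "octo_laplacian (Suc (r * d)) d"
  obtain V es where "orthonormal_eigenbasis ?L V es ?k"
    using real_symmetric_orthonormal_eigenbasis[OF octo_laplacian_carrier octo_laplacian_symmetric] .
  then interpret orthonormal_eigenbasis ?L V es ?k .
  show ?thesis
  proof (rule lambda2_ge[of "vec ?k (\<lambda>_. 1)"])
    show "2 \<le> ?k" using d r by (simp add: Suc_le_eq)
    fix z :: "real vec" assume z: "z \<in> carrier_vec ?k" and "vec ?k (\<lambda>_. 1) \<bullet> z = 0"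
    then have "(\<Sum>i<?k. z $ i) = 0" by (simp add: scalar_prod_def atLeast0LessThan)
    then have "z \<bullet> z \<le> real d ^ 2 * (z \<bullet> (?L *\<^sub>v z))"
      using octo_poincare[of "\<lambda>i. z $ i" r d] octo_laplacian_quadratic_form[OF d z] z
      by (simp add: scalar_prod_def power2_eq_square atLeast0LessThan)
    then show "1 / real d ^ 2 * (z \<bullet> z) \<le> z \<bullet> (?L *\<^sub>v z)" using d by (simp add: field_simps)
  qed simp
qed

lemma octo_ramp_span_quadratic_forms:
  fixes a b :: real
  assumes d: "d \<ge> 1" and r: "r \<ge> 1"
  defines "k \<equiv> Suc (r * d)" and "y \<equiv> \<lambda>i. if i < d then real (Suc i) else 0"
  defines "\<mu> \<equiv> (\<Sum>i<k. y i) / real k"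
  defines "z \<equiv> vec k (\<lambda>i. a + b * (y i - \<mu>))"
  shows "z \<bullet> z = real k * a\<^sup>2 + b\<^sup>2 * (\<Sum>i<k. (y i - \<mu>)\<^sup>2)"
    and "z \<bullet> (octo_laplacian k d *\<^sub>v z) = b\<^sup>2 * real d"
proof -
  have "real k * \<mu> = (\<Sum>i<k. y i)" unfolding \<mu>_def k_def by (simp del: of_nat_Suc)
  then have centered: "(\<Sum>i<k. y i - \<mu>) = 0" by (simp add: sum_subtractf)
  have square_sum: "(\<Sum>i\<in>I. (a + b * f i)\<^sup>2) =
    real (card I) * a\<^sup>2 + 2 * a * b * (\<Sum>i\<in>I. f i) + b\<^sup>2 * (\<Sum>i\<in>I. (f i)\<^sup>2)"
    for I :: "nat set" and f :: "nat \<Rightarrow> real"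
    by (simp add: power2_sum sum.distrib sum_distrib_left sum_distrib_right power_mult_distrib mult_ac)
  have "z \<bullet> z = (\<Sum>i<k. (a + b * (y i - \<mu>))\<^sup>2)"
    unfolding z_def by (simp add: scalar_prod_def power2_eq_square atLeast0LessThan)
  then show "z \<bullet> z = real k * a\<^sup>2 + b\<^sup>2 * (\<Sum>i<k. (y i - \<mu>)\<^sup>2)"
    unfolding square_sum using centered by simp
  have z: "z \<in> carrier_vec (Suc (r * d))" unfolding z_def k_def by simp
  have "z \<bullet> (octo_laplacian k d *\<^sub>v z) = octo_energy r d (\<lambda>i. a + b * (y i - \<mu>))"
    unfolding k_def octo_laplacian_quadratic_form[OF d z]
    by (rule octo_energy_cong) (simp add: z_def k_def)
  also have "\<dots> = b\<^sup>2 * octo_energy r d (\<lambda>i. y i - \<mu>)" by (rule octo_energy_affine)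
  also have "octo_energy r d (\<lambda>i. y i - \<mu>) = octo_energy r d y"
    using octo_energy_affine[of r d "- \<mu>" 1 y] by simp
  also have "\<dots> = real d" unfolding y_def by (rule octo_energy_ramp[OF d r])
  finally show "z \<bullet> (octo_laplacian k d *\<^sub>v z) = b\<^sup>2 * real d" .
qed

lemma octo_lambda2_le:
  assumes d: "d \<ge> 1" and r: "r \<ge> 1"
  shows "lambda2 (octo_laplacian (Suc (r * d)) d) \<le> 12 / real d ^ 2"
proof -
  let ?k = "Suc (r * d)" and ?L = "octo_laplacian (Suc (r * d)) d"
  obtain V es where "orthonormal_eigenbasis ?L V es ?k"
    using real_symmetric_orthonormal_eigenbasis[OF octo_laplacian_carrier octo_laplacian_symmetric] .
  then interpret orthonormal_eigenbasis ?L V es ?k .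
  define y where "y = (\<lambda>i. if i < d then real (Suc i) else 0)"
  define \<mu> where "\<mu> = (\<Sum>i<?k. y i) / real ?k"
  define N where "N = (\<Sum>i<?k. (y i - \<mu>)\<^sup>2)"
  have "d < ?k" using r by (simp add: le_imp_less_Suc)
  then have N: "real d ^ 3 \<le> 12 * N"
    unfolding N_def \<mu>_def y_def by (rule ramp_centered_sum_squares[OF d])
  have dpos: "real d > 0" using d by simp
  then have N_pos: "N > 0" using N by (smt (verit) zero_less_power)
  show ?thesis
  proof (rule lambda2_le[of "vec ?k (\<lambda>_. 1)" "vec ?k (\<lambda>i. y i - \<mu>)"])
    fix a b :: real assume ab: "a \<noteq> 0 \<or> b \<noteq> 0"
    define z where "z = a \<cdot>\<^sub>v vec ?k (\<lambda>_. 1) + b \<cdot>\<^sub>v vec ?k (\<lambda>i. y i - \<mu>)"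
    have zv: "z = vec ?k (\<lambda>i. a + b * (y i - \<mu>))" unfolding z_def by auto
    have zz: "z \<bullet> z = real ?k * a\<^sup>2 + b\<^sup>2 * N"
      unfolding zv N_def \<mu>_def y_def by (rule octo_ramp_span_quadratic_forms(1)[OF d r])
    have zLz: "z \<bullet> (?L *\<^sub>v z) = b\<^sup>2 * real d"
      unfolding zv \<mu>_def y_def by (rule octo_ramp_span_quadratic_forms(2)[OF d r])
    have "real ?k * a\<^sup>2 + b\<^sup>2 * N > 0"
      using ab N_pos by (auto intro: add_pos_nonneg add_nonneg_pos simp del: of_nat_Suc)
    then have "z \<noteq> 0\<^sub>v ?k" using zz by auto
    have "b\<^sup>2 * real d \<le> b\<^sup>2 * (12 / real d ^ 2 * N)"
      using N dpos by (intro mult_left_mono) (simp_all add: field_simps power3_eq_cube power2_eq_square)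
    also have "\<dots> \<le> 12 / real d ^ 2 * (real ?k * a\<^sup>2 + b\<^sup>2 * N)"
      using dpos by (simp add: field_simps)
    finally show "z \<noteq> 0\<^sub>v ?k \<and> z \<bullet> (?L *\<^sub>v z) \<le> 12 / real d ^ 2 * (z \<bullet> z)"
      using \<open>z \<noteq> 0\<^sub>v ?k\<close> zz zLz by simp
  qed simp_all
qed

theorem lemma5:
  shows "\<exists>c c' :: real. c > 0 \<and> c' > 0 \<and>
    (\<forall>d k :: nat. d \<ge> 1 \<longrightarrow> k \<ge> 2 \<longrightarrow> d dvd (k - 1) \<longrightarrow>
       c / real d ^ 2 \<le> lambda2 (octo_laplacian k d) \<and>
       lambda2 (octo_laplacian k d) \<le> c' / real d ^ 2)"
proof (rule exI[of _ 1], rule exI[of _ 12], intro conjI allI impI)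
  fix d k :: nat assume d: "d \<ge> 1" and k: "k \<ge> 2" and "d dvd (k - 1)"
  then obtain r where kr: "k = Suc (r * d)" by (metis Suc_diff_1 dvdE mult.commute less_le_trans pos2)
  then have r: "r \<ge> 1" using k by (cases r) auto
  show "1 / real d ^ 2 \<le> lambda2 (octo_laplacian k d)" unfolding kr by (rule octo_lambda2_ge[OF d r])
  show "lambda2 (octo_laplacian k d) \<le> 12 / real d ^ 2" unfolding kr by (rule octo_lambda2_le[OF d r])
qed simp_all

end
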